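(* Consider an instance with $n$ agents, $m$ indivisible items and binary additive valuations (notation as in the context). For any two stable allocations $\chi,\chi'$ with profiles $(h_1,\dots,h_n)$ and $(h'_1,\dots,h'_n)$, we have $|h_i-h'_i|\le 1$ for every agent $i\in[n]$; i.e. the Chebyshev distance between $\mathbf{p}(\chi)$ and $\mathbf{p}(\chi')$ is at most $1$.
   Context: Agents $[n]$, items $[m]$. Each agent $i$ has a set $L_i\subseteq[m]$ of liked items and valuation $v_i(S)=|S\cap L_i|$. An allocation $\chi=(\chi_1,\dots,\chi_n)$ is a tuple of pairwise disjoint subsets of $[m]$; it is clean if $\chi_i\subseteq L_i$ for all $i$, and max-USW if it maximizes $\sum_i v_i(\chi_i)$. Throughout, "allocation" means a clean max-USW allocation. Profile: $\mathbf{p}(\chi)=(h_1,\dots,h_n)$, $h_i=|\chi_i|$. Given $\chi$, form a directed graph on $[n]$ with an arc $(i,i')$, $i\ne i'$, whenever some $o\in\chi_i$ has $o\in L_{i'}$; $\chi$ admits a transfer $u\to v$ if there is a simple directed path from $u$ to $v$ with at least one arc. A transfer $u\to v$ is narrowing if $h_u\ge h_v+2$; $\chi$ is stable if it admits no narrowing transfer. *)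

theory Defs
  imports Main
begin

text \<open>Agents are 0..<n, items are 0..<m. L i is the set of items liked by agent i.
  An allocation is a function chi from agents to item sets.\<close>

definition valuation :: "(nat \<Rightarrow> nat set) \<Rightarrow> nat \<Rightarrow> nat set \<Rightarrow> nat" where
  "valuation L i S = card (S \<inter> L i)"

definition is_allocation :: "nat \<Rightarrow> nat \<Rightarrow> (nat \<Rightarrow> nat set) \<Rightarrow> bool" where
  "is_allocation n m chi \<longleftrightarrow>
     (\<forall>i<n. chi i \<subseteq> {..<m}) \<and>
     (\<forall>i<n. \<forall>j<n. i \<noteq> j \<longrightarrow> chi i \<inter> chi j = {})"

definition is_clean :: "nat \<Rightarrow> (nat \<Rightarrow> nat set) \<Rightarrow> (nat \<Rightarrow> nat set) \<Rightarrow> bool" where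
  "is_clean n L chi \<longleftrightarrow> (\<forall>i<n. chi i \<subseteq> L i)"

definition usw :: "nat \<Rightarrow> (nat \<Rightarrow> nat set) \<Rightarrow> (nat \<Rightarrow> nat set) \<Rightarrow> nat" where
  "usw n L chi = (\<Sum>i<n. valuation L i (chi i))"

definition is_max_usw :: "nat \<Rightarrow> nat \<Rightarrow> (nat \<Rightarrow> nat set) \<Rightarrow> (nat \<Rightarrow> nat set) \<Rightarrow> bool" where
  "is_max_usw n m L chi \<longleftrightarrow> is_allocation n m chi \<and>
     (\<forall>psi. is_allocation n m psi \<longrightarrow> usw n L psi \<le> usw n L chi)"

definition good_allocation :: "nat \<Rightarrow> nat \<Rightarrow> (nat \<Rightarrow> nat set) \<Rightarrow> (nat \<Rightarrow> nat set) \<Rightarrow> bool" where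
  "good_allocation n m L chi \<longleftrightarrow> is_clean n L chi \<and> is_max_usw n m L chi"

definition profile :: "(nat \<Rightarrow> nat set) \<Rightarrow> nat \<Rightarrow> nat" where
  "profile chi i = card (chi i)"

definition arc :: "nat \<Rightarrow> (nat \<Rightarrow> nat set) \<Rightarrow> (nat \<Rightarrow> nat set) \<Rightarrow> nat \<Rightarrow> nat \<Rightarrow> bool" where
  "arc n L chi i i' \<longleftrightarrow> i < n \<and> i' < n \<and> i \<noteq> i' \<and> (\<exists>it\<in>chi i. it \<in> L i')"

definition admits_transfer :: "nat \<Rightarrow> (nat \<Rightarrow> nat set) \<Rightarrow> (nat \<Rightarrow> nat set) \<Rightarrow> nat \<Rightarrow> nat \<Rightarrow> bool" where
  "admits_transfer n L chi u v \<longleftrightarrow>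
     (\<exists>ps. length ps \<ge> 2 \<and> distinct ps \<and> hd ps = u \<and> last ps = v \<and>
        (\<forall>k. Suc k < length ps \<longrightarrow> arc n L chi (ps ! k) (ps ! Suc k)))"

definition narrowing_transfer :: "nat \<Rightarrow> (nat \<Rightarrow> nat set) \<Rightarrow> (nat \<Rightarrow> nat set) \<Rightarrow> nat \<Rightarrow> nat \<Rightarrow> bool" where
  "narrowing_transfer n L chi u v \<longleftrightarrow>
     admits_transfer n L chi u v \<and> profile chi u \<ge> profile chi v + 2"

definition stable :: "nat \<Rightarrow> (nat \<Rightarrow> nat set) \<Rightarrow> (nat \<Rightarrow> nat set) \<Rightarrow> bool" where
  "stable n L chi \<longleftrightarrow> (\<forall>u<n. \<forall>v<n. \<not> narrowing_transfer n L chi u v)"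

end

theory Submission
  imports Defs "HOL-Library.Transitive_Closure_Table"
begin

text \<open>Suppose agent u has at least two more items in \<open>\<chi>\<close> than in \<open>\<chi>'\<close>. Let R be the set of
  agents reachable from u by following items: a step a \<rightarrow> b means some item of \<open>\<chi> a\<close> lies in
  \<open>\<chi>' b\<close>. R is closed under this step, so giving the agents of R their bundles from \<open>\<chi>\<close> and
  everybody else theirs from \<open>\<chi>'\<close> is again an allocation; maximality of \<open>\<chi>'\<close> forces the agents
  of R to receive in total at most as much under \<open>\<chi>\<close> as under \<open>\<chi>'\<close>. Hence some v \<in> R gains
  strictly in \<open>\<chi>'\<close>. The path u \<rightarrow> v is a transfer in \<open>\<chi>\<close> and its reverse a transfer in \<open>\<chi>'\<close>,
  and stability of both allocations along these two transfers contradicts the gaps at u and v.\<close>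

lemma rtrancl_path_successively:
  "rtrancl_path r x xs y \<Longrightarrow> successively r (x # xs) \<and> last (x # xs) = y"
  by (induction rule: rtrancl_path.induct) (auto simp: successively_Cons)

lemma sum_le_sum_imp_ex_less:
  fixes f g :: "'a \<Rightarrow> 'b::{ordered_cancel_comm_monoid_add, linorder}"
  assumes "finite R" and "u \<in> R" and "g u < f u" and "sum f R \<le> sum g R"
  shows "\<exists>v\<in>R. f v < g v"
proof (rule ccontr)
  assume "\<not> ?thesis"
  then have "sum g R < sum f R"
    using assms(1-3) by (intro sum_strict_mono_ex1) (auto simp: not_less)
  with assms(4) show False by simp
qed

lemma admits_transfer_if_rtranclp:
  assumes "(arc n L chi)\<^sup>*\<^sup>* u v" and "u \<noteq> v"
  shows "admits_transfer n L chi u v"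
proof -
  obtain xs where path: "rtrancl_path (arc n L chi) u xs v" and "distinct (u # xs)"
    using assms(1) rtrancl_path_distinct rtranclp_eq_rtrancl_path by metis
  moreover have "successively (arc n L chi) (u # xs)" and "last (u # xs) = v"
    using rtrancl_path_successively[OF path] by auto
  moreover have "length (u # xs) \<ge> 2"
    using \<open>last (u # xs) = v\<close> assms(2) by (cases xs) auto
  ultimately show ?thesis
    unfolding admits_transfer_def using successively_nth list.sel(1) by metis
qed

lemma stable_transfer_profile_le:
  assumes "stable n L chi" and "u < n" and "v < n" and "admits_transfer n L chi u v"
  shows "profile chi u \<le> profile chi v + 1"
proof -
  have "\<not> profile chi u \<ge> profile chi v + 2"
    using assms unfolding stable_def narrowing_transfer_def by blast
  then show ?thesis by linarith
qed

definition item_moves :: "nat \<Rightarrow> (nat \<Rightarrow> nat set) \<Rightarrow> (nat \<Rightarrow> nat set) \<Rightarrow> nat \<Rightarrow> nat \<Rightarrow> bool" where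
  "item_moves n chi chi' a b \<longleftrightarrow> a < n \<and> b < n \<and> a \<noteq> b \<and> chi a \<inter> chi' b \<noteq> {}"

lemma item_moves_rtranclp_swap:
  assumes "(item_moves n chi chi')\<^sup>*\<^sup>* u v"
  shows "(item_moves n chi' chi)\<^sup>*\<^sup>* v u"
proof -
  have "item_moves n chi' chi = (item_moves n chi chi')\<inverse>\<inverse>"
    by (auto simp: item_moves_def fun_eq_iff)
  with assms show ?thesis by (simp add: rtranclp_conversep)
qed

lemma admits_transfer_if_item_moves:
  assumes "is_clean n L chi'" and "(item_moves n chi chi')\<^sup>*\<^sup>* u v" and "u \<noteq> v"
  shows "admits_transfer n L chi u v"
proof -
  have "item_moves n chi chi' \<le> arc n L chi"
    using assms(1) by (auto simp: item_moves_def is_clean_def arc_def) blast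
  then have "(arc n L chi)\<^sup>*\<^sup>* u v"
    using assms(2) rtranclp_mono by blast
  then show ?thesis
    using assms(3) by (rule admits_transfer_if_rtranclp)
qed

lemma is_allocation_patch:
  assumes "is_allocation n m chi" and "is_allocation n m chi'"
    and closed: "\<And>a b. a \<in> R \<Longrightarrow> item_moves n chi chi' a b \<Longrightarrow> b \<in> R"
  shows "is_allocation n m (\<lambda>a. if a \<in> R then chi a else chi' a)"
proof -
  have "chi a \<inter> chi' b = {}" if "a \<in> R" "b \<notin> R" "a < n" "b < n" for a b
    using closed[OF that(1)] that by (auto simp: item_moves_def)
  with assms(1,2) show ?thesis
    unfolding is_allocation_def by (metis (full_types) inf_commute)
qed

lemma usw_clean:
  "is_clean n L chi \<Longrightarrow> usw n L chi = (\<Sum>i<n. profile chi i)"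
  unfolding usw_def valuation_def profile_def is_clean_def
  by (intro sum.cong) (auto simp: Int_absorb2)

lemma sum_profile_le_on_closed_set:
  assumes good: "good_allocation n m L chi" and good': "good_allocation n m L chi'"
    and R: "R \<subseteq> {..<n}"
    and closed: "\<And>a b. a \<in> R \<Longrightarrow> item_moves n chi chi' a b \<Longrightarrow> b \<in> R"
  shows "(\<Sum>i\<in>R. profile chi i) \<le> (\<Sum>i\<in>R. profile chi' i)"
proof -
  define psi where "psi = (\<lambda>a. if a \<in> R then chi a else chi' a)"
  have "is_allocation n m psi"
    unfolding psi_def using good good' closed
    by (intro is_allocation_patch) (auto simp: good_allocation_def is_max_usw_def)
  then have "usw n L psi \<le> usw n L chi'"
    using good' by (auto simp: good_allocation_def is_max_usw_def)
  moreover have "is_clean n L psi" and "is_clean n L chi'"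
    using good good' by (auto simp: psi_def good_allocation_def is_clean_def)
  moreover have "finite R" and "{..<n} \<inter> R = R"
    using R finite_subset by auto
  ultimately have "(\<Sum>i\<in>R. profile chi i) + (\<Sum>i\<in>{..<n} - R. profile chi' i)
      \<le> (\<Sum>i\<in>R. profile chi' i) + (\<Sum>i\<in>{..<n} - R. profile chi' i)"
    using R by (simp add: usw_clean psi_def profile_def sum.If_cases Diff_eq sum.subset_diff)
  then show ?thesis by simp
qed

lemma stable_profile_gap_lt_two:
  assumes good: "good_allocation n m L chi" and stable: "stable n L chi"
    and good': "good_allocation n m L chi'" and stable': "stable n L chi'"
    and "u < n"
  shows "profile chi u < profile chi' u + 2"
proof (rule ccontr)
  assume gap: "\<not> ?thesis"
  define R where "R = {a. (item_moves n chi chi')\<^sup>*\<^sup>* u a}"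
  have R: "R \<subseteq> {..<n}"
  proof
    fix a assume "a \<in> R"
    then have "(item_moves n chi chi')\<^sup>*\<^sup>* u a" by (simp add: R_def)
    then show "a \<in> {..<n}"
      using \<open>u < n\<close> by (induction rule: rtranclp_induct) (auto simp: item_moves_def)
  qed
  have "(\<Sum>i\<in>R. profile chi i) \<le> (\<Sum>i\<in>R. profile chi' i)"
    using good good' R by (rule sum_profile_le_on_closed_set) (auto simp: R_def)
  moreover have "u \<in> R" and "finite R"
    using R finite_subset by (auto simp: R_def)
  ultimately obtain v where "v \<in> R" and v_gains: "profile chi v < profile chi' v"
    using gap sum_le_sum_imp_ex_less[of R u "profile chi'" "profile chi"] by auto
  then have "v < n" and moves: "(item_moves n chi chi')\<^sup>*\<^sup>* u v" and "u \<noteq> v"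
    using R gap by (auto simp: R_def)
  have "admits_transfer n L chi u v"
    using good' moves \<open>u \<noteq> v\<close>
    by (intro admits_transfer_if_item_moves) (auto simp: good_allocation_def)
  with stable \<open>u < n\<close> \<open>v < n\<close> have u_bound: "profile chi u \<le> profile chi v + 1"
    by (rule stable_transfer_profile_le)
  have "admits_transfer n L chi' v u"
    using good item_moves_rtranclp_swap[OF moves] \<open>u \<noteq> v\<close>
    by (intro admits_transfer_if_item_moves) (auto simp: good_allocation_def)
  with stable' \<open>v < n\<close> \<open>u < n\<close> have "profile chi' v \<le> profile chi' u + 1"
    by (rule stable_transfer_profile_le)
  with u_bound gap v_gains show False by linarith
qed

theorem theorem2:
  fixes n m :: nat and L chi chi' :: "nat \<Rightarrow> nat set"
  assumes "\<forall>i<n. L i \<subseteq> {..<m}"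
    and "good_allocation n m L chi" and "stable n L chi"
    and "good_allocation n m L chi'" and "stable n L chi'"
  shows "\<forall>i<n. \<bar>int (profile chi i) - int (profile chi' i)\<bar> \<le> 1"
proof (intro allI impI)
  fix i assume "i < n"
  have "profile chi i < profile chi' i + 2"
    by (rule stable_profile_gap_lt_two[OF assms(2-5) \<open>i < n\<close>])
  moreover have "profile chi' i < profile chi i + 2"
    by (rule stable_profile_gap_lt_two[OF assms(4,5,2,3) \<open>i < n\<close>])
  ultimately show "\<bar>int (profile chi i) - int (profile chi' i)\<bar> \<le> 1" by linarith
qed

end
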